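(* Let $\epsilon>0$ and $0<p\le 1$. Every $(p,\epsilon p)$-quasirandom bipartite graph is $(2\epsilon^{1/7})$-regular.
   Context: A bipartite graph $G=(U,V;E)$ is regular if all vertices in $U$ have the same degree and all vertices in $V$ have the same degree; its density is $|E|/(|U||V|)$. $d_G(A,B)=e_G(A,B)/(|A||B|)$ for $A\subseteq U$, $B\subseteq V$, where $e_G(A,B)$ is the number of edges between $A$ and $B$. For $u,u'\in U$, $\mathrm{codeg}(u,u')$ is the number of common neighbours of $u,u'$ in $V$. A regular bipartite graph $G=(U,V;E)$ of density $p$ is $(p,\delta)$-quasirandom if all but at most $\delta|U|^2$ ordered pairs $(u,u')\in U^2$ satisfy $\mathrm{codeg}(u,u')\le(1+\delta)p^2|V|$. A bipartite graph $G=(U,V;E)$ of density $p$ is $(\epsilon)$-regular if all $A\subseteq U$, $B\subseteq V$ with $|A|\ge\epsilon|U|$, $|B|\ge\epsilon|V|$ satisfy $|d_G(A,B)-p|\le\epsilon p$. *)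

theory Defs
  imports Complex_Main
begin

definition bipartite_graph :: "'a set \<Rightarrow> 'b set \<Rightarrow> ('a \<times> 'b) set \<Rightarrow> bool" where
  "bipartite_graph U V E \<longleftrightarrow> finite U \<and> finite V \<and> E \<subseteq> U \<times> V"

definition edges_between :: "('a \<times> 'b) set \<Rightarrow> 'a set \<Rightarrow> 'b set \<Rightarrow> nat" where
  "edges_between E A B = card (E \<inter> (A \<times> B))"

definition pair_density :: "('a \<times> 'b) set \<Rightarrow> 'a set \<Rightarrow> 'b set \<Rightarrow> real" where
  "pair_density E A B = real (edges_between E A B) / (real (card A) * real (card B))"

definition bdensity :: "'a set \<Rightarrow> 'b set \<Rightarrow> ('a \<times> 'b) set \<Rightarrow> real" where
  "bdensity U V E = real (card E) / (real (card U) * real (card V))"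

definition degU :: "('a \<times> 'b) set \<Rightarrow> 'a \<Rightarrow> nat" where
  "degU E u = card {v. (u, v) \<in> E}"

definition degV :: "('a \<times> 'b) set \<Rightarrow> 'b \<Rightarrow> nat" where
  "degV E v = card {u. (u, v) \<in> E}"

definition regular_bipartite :: "'a set \<Rightarrow> 'b set \<Rightarrow> ('a \<times> 'b) set \<Rightarrow> bool" where
  "regular_bipartite U V E \<longleftrightarrow> bipartite_graph U V E \<and>
     (\<forall>u\<in>U. \<forall>u'\<in>U. degU E u = degU E u') \<and>
     (\<forall>v\<in>V. \<forall>v'\<in>V. degV E v = degV E v')"

definition codeg :: "'b set \<Rightarrow> ('a \<times> 'b) set \<Rightarrow> 'a \<Rightarrow> 'a \<Rightarrow> nat" where
  "codeg V E u u' = card {v\<in>V. (u, v) \<in> E \<and> (u', v) \<in> E}"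

definition quasirandom :: "real \<Rightarrow> real \<Rightarrow> 'a set \<Rightarrow> 'b set \<Rightarrow> ('a \<times> 'b) set \<Rightarrow> bool" where
  "quasirandom p \<delta> U V E \<longleftrightarrow> regular_bipartite U V E \<and> bdensity U V E = p \<and>
     real (card {(u, u') \<in> U \<times> U. real (codeg V E u u') > (1 + \<delta>) * p\<^sup>2 * real (card V)})
       \<le> \<delta> * real (card U)^2"

definition eps_regular :: "real \<Rightarrow> 'a set \<Rightarrow> 'b set \<Rightarrow> ('a \<times> 'b) set \<Rightarrow> bool" where
  "eps_regular \<epsilon> U V E \<longleftrightarrow> bipartite_graph U V E \<and>
     (\<forall>A B. A \<subseteq> U \<longrightarrow> B \<subseteq> V \<longrightarrow> real (card A) \<ge> \<epsilon> * real (card U) \<longrightarrow>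
        real (card B) \<ge> \<epsilon> * real (card V) \<longrightarrow>
        \<bar>pair_density E A B - bdensity U V E\<bar> \<le> \<epsilon> * bdensity U V E)"

end

theory Submission
  imports Defs "HOL-Analysis.Convex"
begin

(*
  For A \<subseteq> U let f(v) = |N(v) \<inter> A|. Since all vertices of U have degree p|V|, the sum of f
  over V is p|A||V|; the sum of f^2 over V is the sum of codeg(u,u') over A \<times> A, which
  quasirandomness bounds by (1 + \<epsilon>p) p^2 |V| |A|^2 plus p|V| for each of the at most
  \<epsilon>p|U|^2 exceptional pairs. So the variance of f is at most 2\<epsilon>p^2|U|^2|V|, and
  Cauchy-Schwarz over B gives (e(A,B) - p|A||B|)^2 \<le> 2\<epsilon>p^2|U|^2|V||B|. For
  |A| \<ge> c|U| and |B| \<ge> c|V| with c = 2\<epsilon>^(1/7) \<le> 1 this is at most (c p |A||B|)^2,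
  because c^7 = 128\<epsilon> gives 2\<epsilon> \<le> c^5.
*)

lemma card_Int_Times_eq_sum_fst:
  assumes "finite A" "finite B"
  shows "card (S \<inter> A \<times> B) = (\<Sum>v\<in>B. card {u\<in>A. (u, v) \<in> S})"
proof -
  have "S \<inter> A \<times> B = (\<Union>v\<in>B. {u\<in>A. (u, v) \<in> S} \<times> {v})" by blast
  also have "card \<dots> = (\<Sum>v\<in>B. card ({u\<in>A. (u, v) \<in> S} \<times> {v}))"
    using assms by (intro card_UN_disjoint) auto
  finally show ?thesis by (simp add: card_cartesian_product)
qed

lemma card_Int_Times_eq_sum_snd:
  assumes "finite A" "finite B"
  shows "card (S \<inter> A \<times> B) = (\<Sum>u\<in>A. card {v\<in>B. (u, v) \<in> S})"
proof -
  have "S \<inter> A \<times> B = (\<Union>u\<in>A. {u} \<times> {v\<in>B. (u, v) \<in> S})" by blast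
  also have "card \<dots> = (\<Sum>u\<in>A. card ({u} \<times> {v\<in>B. (u, v) \<in> S}))"
    using assms by (intro card_UN_disjoint) auto
  finally show ?thesis by (simp add: card_cartesian_product_singleton)
qed

definition degV_into :: "('a \<times> 'b) set \<Rightarrow> 'a set \<Rightarrow> 'b \<Rightarrow> nat" where
  "degV_into E A v = card {u\<in>A. (u, v) \<in> E}"

lemma edges_between_eq_sum_degV_into:
  assumes "finite A" "finite B"
  shows "edges_between E A B = (\<Sum>v\<in>B. degV_into E A v)"
  unfolding edges_between_def degV_into_def using assms by (rule card_Int_Times_eq_sum_fst)

lemma degU_eq_card:
  assumes "E \<subseteq> U \<times> V"
  shows "degU E u = card {v\<in>V. (u, v) \<in> E}"
  unfolding degU_def using assms by (intro arg_cong[where f=card]) auto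

lemma sum_degV_into_eq_sum_degU:
  assumes "E \<subseteq> U \<times> V" "finite A" "finite V"
  shows "(\<Sum>v\<in>V. degV_into E A v) = (\<Sum>u\<in>A. degU E u)"
  unfolding degV_into_def
  using card_Int_Times_eq_sum_fst[OF assms(2,3)] card_Int_Times_eq_sum_snd[OF assms(2,3)]
  by (simp add: degU_eq_card[OF assms(1)])

lemma sum_degV_into_squared_eq_sum_codeg:
  assumes "finite A" "finite V"
  shows "(\<Sum>v\<in>V. (degV_into E A v)\<^sup>2) = (\<Sum>u\<in>A. \<Sum>u'\<in>A. codeg V E u u')"
proof -
  define S where "S = {((u, u'), v). (u, v) \<in> E \<and> (u', v) \<in> E}"
  have "(degV_into E A v)\<^sup>2 = card {x\<in>A \<times> A. (x, v) \<in> S}" for v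
  proof -
    have "{x\<in>A \<times> A. (x, v) \<in> S} = {u\<in>A. (u, v) \<in> E} \<times> {u\<in>A. (u, v) \<in> E}"
      unfolding S_def by auto
    then show ?thesis by (simp add: degV_into_def power2_eq_square card_cartesian_product)
  qed
  then have "(\<Sum>v\<in>V. (degV_into E A v)\<^sup>2) = card (S \<inter> (A \<times> A) \<times> V)"
    using card_Int_Times_eq_sum_fst[of "A \<times> A" V S] assms by simp
  also have "\<dots> = (\<Sum>x\<in>A \<times> A. card {v\<in>V. (x, v) \<in> S})"
    using card_Int_Times_eq_sum_snd[of "A \<times> A" V S] assms by simp
  also have "\<dots> = (\<Sum>u\<in>A. \<Sum>u'\<in>A. codeg V E u u')"
    unfolding sum.cartesian_product codeg_def S_def by (intro sum.cong) auto
  finally show ?thesis .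
qed

lemma sum_le_threshold_plus_count_above:
  fixes g :: "'a \<Rightarrow> real" and T K :: real
  assumes "finite X" "0 \<le> T" "\<And>x. x \<in> X \<Longrightarrow> g x \<le> K"
  shows "(\<Sum>x\<in>X. g x) \<le> T * card X + K * card {x\<in>X. T < g x}"
proof -
  have "(\<Sum>x\<in>X. g x) \<le> (\<Sum>x\<in>X. T + K * of_bool (T < g x))"
    using assms(2,3) by (intro sum_mono) (fastforce simp: not_less)
  also have "\<dots> = T * card X + K * (\<Sum>x\<in>X. of_bool (T < g x))"
    by (simp add: sum.distrib sum_distrib_left)
  also have "(\<Sum>x\<in>X. of_bool (T < g x) :: real) = card {x\<in>X. T < g x}"
    using assms(1) by (simp add: sum_of_bool_eq Int_def conj_commute)
  finally show ?thesis .
qed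

lemma sum_subset_squared_le:
  fixes g :: "'a \<Rightarrow> real"
  assumes "B \<subseteq> V" "finite V"
  shows "(\<Sum>v\<in>B. g v)\<^sup>2 \<le> card B * (\<Sum>v\<in>V. (g v)\<^sup>2)"
proof -
  have "(\<Sum>v\<in>B. g v)\<^sup>2 \<le> card B * (\<Sum>v\<in>B. (g v)\<^sup>2)"
    using sum_squared_le_sum_of_squares[of g B] by (simp add: mult.commute)
  also have "\<dots> \<le> card B * (\<Sum>v\<in>V. (g v)\<^sup>2)"
    using assms by (intro mult_left_mono sum_mono2) auto
  finally show ?thesis .
qed

lemma quasirandom_imp_bipartite_graph:
  "quasirandom p \<delta> U V E \<Longrightarrow> bipartite_graph U V E"
  unfolding quasirandom_def regular_bipartite_def by blast

lemma quasirandom_degU: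
  assumes "quasirandom p \<delta> U V E" "0 < p"
  shows "card U > 0" "card V > 0" "u \<in> U \<Longrightarrow> real (degU E u) = p * card V"
proof -
  have reg: "regular_bipartite U V E" and dens: "real (card E) / (real (card U) * real (card V)) = p"
    using assms(1) unfolding quasirandom_def bdensity_def by blast+
  have fin: "finite U" "finite V" and EUV: "E \<subseteq> U \<times> V"
    and deg_eq: "\<And>u u'. u \<in> U \<Longrightarrow> u' \<in> U \<Longrightarrow> degU E u = degU E u'"
    using reg unfolding regular_bipartite_def bipartite_graph_def by blast+
  from dens assms(2) show U0: "card U > 0" and V0: "card V > 0"
    by (auto intro!: gr0I)
  then obtain u0 where u0: "u0 \<in> U" by (metis card_gt_0_iff ex_in_conv)
  have "card E = (\<Sum>u\<in>U. degU E u)"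
    using card_Int_Times_eq_sum_snd[OF fin, of E] EUV by (simp add: Int_absorb2 degU_eq_card[OF EUV])
  also have "\<dots> = card U * degU E u0"
    using deg_eq[OF _ u0] by simp
  finally have "real (degU E u0) = p * card V"
    using dens U0 V0 by (simp add: field_simps)
  then show "real (degU E u) = p * card V" if "u \<in> U"
    using deg_eq[OF that u0] by simp
qed

lemma quasirandom_sum_codeg_le:
  assumes "quasirandom p \<delta> U V E" "0 < p" "0 \<le> \<delta>" "A \<subseteq> U"
  shows "real (\<Sum>u\<in>A. \<Sum>u'\<in>A. codeg V E u u')
    \<le> (1 + \<delta>) * p\<^sup>2 * card V * real (card A) ^ 2 + p * card V * \<delta> * real (card U) ^ 2"
proof -
  define T where "T = (1 + \<delta>) * p\<^sup>2 * card V"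
  define Bad where "Bad = {(u, u') \<in> U \<times> U. real (codeg V E u u') > T}"
  have bad: "real (card Bad) \<le> \<delta> * real (card U) ^ 2"
    using assms(1) unfolding quasirandom_def Bad_def T_def by blast
  have finU: "finite U" and finV: "finite V" and EUV: "E \<subseteq> U \<times> V"
    using quasirandom_imp_bipartite_graph[OF assms(1)] unfolding bipartite_graph_def by blast+
  have finA: "finite (A \<times> A)" using finU assms(4) finite_subset by blast
  \<comment> \<open>exceptional pairs are only charged their trivial bound, the degree\<close>
  have codeg_le_deg: "real (codeg V E u u') \<le> p * card V" if "u \<in> U" for u u'
  proof -
    have "codeg V E u u' \<le> degU E u"
      unfolding codeg_def degU_eq_card[OF EUV] using finV by (intro card_mono) auto
    then show ?thesis using quasirandom_degU(3)[OF assms(1,2) that] by linarith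
  qed
  have "{x\<in>A \<times> A. T < codeg V E (fst x) (snd x)} \<subseteq> Bad"
    using assms(4) unfolding Bad_def by auto
  then have "card {x\<in>A \<times> A. T < codeg V E (fst x) (snd x)} \<le> card Bad"
    by (rule card_mono[rotated]) (auto simp: Bad_def intro: finite_subset[OF _ finite_cartesian_product[OF finU finU]])
  then have count_bad: "real (card {x\<in>A \<times> A. T < codeg V E (fst x) (snd x)}) \<le> \<delta> * real (card U) ^ 2"
    using bad by linarith
  have "real (\<Sum>u\<in>A. \<Sum>u'\<in>A. codeg V E u u')
      \<le> T * card (A \<times> A) + p * card V * card {x\<in>A \<times> A. T < codeg V E (fst x) (snd x)}"
    unfolding sum.cartesian_product of_nat_sum case_prod_beta
    using assms(3,4) codeg_le_deg unfolding T_def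
    by (intro sum_le_threshold_plus_count_above finA) auto
  also have "\<dots> \<le> T * real (card A) ^ 2 + p * card V * (\<delta> * real (card U) ^ 2)"
    using count_bad assms(2) by (simp add: card_cartesian_product power2_eq_square mult_left_mono)
  finally show ?thesis unfolding T_def by (simp add: mult_ac)
qed

lemma sum_squared_deviation_eq:
  fixes f :: "'a \<Rightarrow> real" and \<mu> :: real
  shows "(\<Sum>v\<in>V. (f v - \<mu>)\<^sup>2) = (\<Sum>v\<in>V. (f v)\<^sup>2) - 2 * \<mu> * (\<Sum>v\<in>V. f v) + card V * \<mu>\<^sup>2"
  by (simp add: power2_diff sum.distrib sum_subtractf sum_distrib_left sum_distrib_right mult_ac)

lemma quasirandom_sum_degV_into_deviation_le:
  assumes "quasirandom p (\<epsilon> * p) U V E" "0 < p" "p \<le> 1" "0 \<le> \<epsilon>" "A \<subseteq> U"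
  shows "(\<Sum>v\<in>V. (real (degV_into E A v) - p * card A)\<^sup>2)
    \<le> 2 * \<epsilon> * p\<^sup>2 * card V * real (card U) ^ 2"
proof -
  define a n m where "a = real (card A)" and "n = real (card U)" and "m = real (card V)"
  have finU: "finite U" and finV: "finite V" and EUV: "E \<subseteq> U \<times> V"
    using quasirandom_imp_bipartite_graph[OF assms(1)] unfolding bipartite_graph_def by blast+
  have finA: "finite A" using finU assms(5) finite_subset by blast
  have "(\<Sum>v\<in>V. real (degV_into E A v)) = (\<Sum>u\<in>A. real (degU E u))"
    using sum_degV_into_eq_sum_degU[OF EUV finA finV] by (metis of_nat_sum)
  also have "\<dots> = (\<Sum>u\<in>A. p * m)"
    using quasirandom_degU(3)[OF assms(1,2)] assms(5) unfolding m_def by (intro sum.cong) auto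
  also have "\<dots> = a * p * m"
    unfolding a_def by simp
  finally have sum1: "(\<Sum>v\<in>V. real (degV_into E A v)) = a * p * m" .
  have "(\<Sum>v\<in>V. (real (degV_into E A v))\<^sup>2) = real (\<Sum>u\<in>A. \<Sum>u'\<in>A. codeg V E u u')"
    by (subst sum_degV_into_squared_eq_sum_codeg[OF finA finV, symmetric]) simp
  also have "\<dots> \<le> (1 + \<epsilon> * p) * p\<^sup>2 * m * a ^ 2 + p * m * (\<epsilon> * p) * n ^ 2"
    using quasirandom_sum_codeg_le[OF assms(1,2) _ assms(5)] assms(2,4) unfolding a_def n_def m_def
    by simp
  finally have sum2: "(\<Sum>v\<in>V. (real (degV_into E A v))\<^sup>2) \<le> \<dots>" .
  have "p * a ^ 2 \<le> n ^ 2"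
  proof -
    have "a \<le> n" unfolding a_def n_def using finU assms(5) by (simp add: card_mono)
    then have "a ^ 2 \<le> n ^ 2" by (simp add: a_def power_mono)
    then show ?thesis using assms(2,3) by (smt (verit) mult_left_le_one_le zero_le_power2)
  qed
  then have "\<epsilon> * p\<^sup>2 * m * (p * a ^ 2) \<le> \<epsilon> * p\<^sup>2 * m * n ^ 2"
    using assms(4) by (intro mult_left_mono) (auto simp: m_def)
  then show ?thesis
    using sum2 unfolding sum_squared_deviation_eq sum1
    by (simp add: a_def n_def m_def algebra_simps power2_eq_square)
qed

lemma quasirandom_edges_between_deviation_le:
  assumes "quasirandom p (\<epsilon> * p) U V E" "0 < p" "p \<le> 1" "0 \<le> \<epsilon>" "A \<subseteq> U" "B \<subseteq> V"
  shows "(real (edges_between E A B) - p * card A * card B)\<^sup>2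
    \<le> 2 * \<epsilon> * p\<^sup>2 * card V * real (card U) ^ 2 * card B"
proof -
  have finU: "finite U" and finV: "finite V"
    using quasirandom_imp_bipartite_graph[OF assms(1)] unfolding bipartite_graph_def by blast+
  have fin: "finite A" "finite B" using finU finV assms(5,6) finite_subset by blast+
  have "real (edges_between E A B) - p * card A * card B
      = (\<Sum>v\<in>B. real (degV_into E A v) - p * card A)"
    by (simp add: edges_between_eq_sum_degV_into[OF fin] sum_subtractf mult_ac)
  then have "(real (edges_between E A B) - p * card A * card B)\<^sup>2
      \<le> card B * (\<Sum>v\<in>V. (real (degV_into E A v) - p * card A)\<^sup>2)"
    using sum_subset_squared_le[OF assms(6) finV] by presburger
  also have "\<dots> \<le> card B * (2 * \<epsilon> * p\<^sup>2 * card V * real (card U) ^ 2)"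
    using quasirandom_sum_degV_into_deviation_le[OF assms(1-5)] by (intro mult_left_mono) auto
  finally show ?thesis by (simp add: mult_ac)
qed

lemma two_mult_le_pow5_of_root7:
  fixes \<epsilon> :: real
  assumes "0 < \<epsilon>" "2 * \<epsilon> powr (1/7) \<le> 1"
  shows "2 * \<epsilon> \<le> (2 * \<epsilon> powr (1/7)) ^ 5"
proof -
  define c where "c = 2 * \<epsilon> powr (1/7)"
  have "(\<epsilon> powr (1/7)) ^ 7 = \<epsilon>"
    using assms(1) by (simp add: powr_realpow[symmetric] powr_powr)
  then have "c ^ 7 = 128 * \<epsilon>" unfolding c_def by (simp add: power_mult_distrib)
  moreover have "c ^ 7 \<le> c ^ 5"
    using assms unfolding c_def by (intro power_decreasing) auto
  ultimately show ?thesis using assms(1) unfolding c_def by linarith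
qed

lemma abs_le_if_squared_le_and_parts_large:
  fixes D c \<epsilon> p a b n m :: real
  assumes "D\<^sup>2 \<le> 2 * \<epsilon> * p\<^sup>2 * m * n ^ 2 * b" "2 * \<epsilon> \<le> c ^ 5"
    and "0 < c" "0 \<le> p" "0 \<le> n" "0 \<le> m" "c * n \<le> a" "c * m \<le> b"
  shows "\<bar>D\<bar> \<le> c * p * a * b"
proof -
  have nonneg: "0 \<le> a" "0 \<le> b"
    using assms(3-8) by (meson mult_nonneg_nonneg less_imp_le order_trans)+
  have "2 * \<epsilon> * m * n ^ 2 \<le> c ^ 5 * m * n ^ 2"
    using assms(2,5,6) by (intro mult_right_mono) auto
  also have "\<dots> = c\<^sup>2 * (c * n)\<^sup>2 * (c * m)"
    by (simp add: power2_eq_square power_def)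
  also have "\<dots> \<le> c\<^sup>2 * a\<^sup>2 * b"
    using assms(3,5-8) by (intro mult_mono power_mono) auto
  finally have key: "2 * \<epsilon> * m * n ^ 2 \<le> c\<^sup>2 * a\<^sup>2 * b" .
  have "D\<^sup>2 \<le> p\<^sup>2 * b * (2 * \<epsilon> * m * n ^ 2)"
    using assms(1) by (simp add: mult_ac)
  also have "\<dots> \<le> p\<^sup>2 * b * (c\<^sup>2 * a\<^sup>2 * b)"
    using key nonneg by (intro mult_left_mono) auto
  also have "\<dots> = (c * p * a * b)\<^sup>2"
    by (simp add: power2_eq_square)
  finally have "\<bar>D\<bar> \<le> \<bar>c * p * a * b\<bar>"
    by (simp only: abs_le_square_iff)
  then show ?thesis
    using assms(3,4) nonneg by simp
qed

lemma quasirandom_pair_density_deviation_le: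
  assumes "quasirandom p (\<epsilon> * p) U V E" "0 < p" "p \<le> 1" "0 \<le> \<epsilon>"
    and "0 < c" "2 * \<epsilon> \<le> c ^ 5"
    and A: "A \<subseteq> U" "c * card U \<le> card A" and B: "B \<subseteq> V" "c * card V \<le> card B"
  shows "\<bar>pair_density E A B - p\<bar> \<le> c * p"
proof -
  have dev: "\<bar>real (edges_between E A B) - p * card A * card B\<bar> \<le> c * p * card A * card B"
    using quasirandom_edges_between_deviation_le[OF assms(1-4) A(1) B(1)] assms(2,5,6) A(2) B(2)
    by (intro abs_le_if_squared_le_and_parts_large[where \<epsilon> = \<epsilon> and n = "card U" and m = "card V"]) auto
  have "0 < c * card U" "0 < c * card V"
    using assms(5) quasirandom_degU(1,2)[OF assms(1,2)] by simp_all
  then have "card A > 0" "card B > 0" using A(2) B(2) by linarith+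
  then have AB: "0 < real (card A) * card B" by simp
  have "pair_density E A B - p
      = (real (edges_between E A B) - p * card A * card B) / (real (card A) * card B)"
    unfolding pair_density_def using \<open>card A > 0\<close> \<open>card B > 0\<close> by (simp add: field_simps)
  then have "\<bar>pair_density E A B - p\<bar>
      = \<bar>real (edges_between E A B) - p * card A * card B\<bar> / (real (card A) * card B)"
    using abs_div_pos[OF AB] by simp
  also have "\<dots> \<le> c * p"
    using dev AB by (simp only: pos_divide_le_eq mult.assoc)
  finally show ?thesis .
qed

theorem lemma5p5:
  fixes U :: "'a set" and V :: "'b set" and E :: "('a \<times> 'b) set"
    and \<epsilon> p :: real
  assumes "\<epsilon> > 0" and "0 < p" and "p \<le> 1"
    and "quasirandom p (\<epsilon> * p) U V E"
  shows "eps_regular (2 * \<epsilon> powr (1/7)) U V E"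
proof -
  define c where "c = 2 * \<epsilon> powr (1/7)"
  have bip: "bipartite_graph U V E" by (rule quasirandom_imp_bipartite_graph[OF assms(4)])
  have dens: "bdensity U V E = p" using assms(4) unfolding quasirandom_def by blast
  have "\<bar>pair_density E A B - p\<bar> \<le> c * p"
    if A: "A \<subseteq> U" "c * card U \<le> card A" and B: "B \<subseteq> V" "c * card V \<le> card B" for A B
  proof -
    have "card A \<le> card U" using A(1) bip by (simp add: bipartite_graph_def card_mono)
    moreover have "card U > 0" by (rule quasirandom_degU(1)[OF assms(4,2)])
    ultimately have "c \<le> 1" using A(2) by (smt (verit) mult_le_cancel_right2 of_nat_0_less_iff of_nat_mono)
    then have "2 * \<epsilon> \<le> c ^ 5"
      unfolding c_def by (rule two_mult_le_pow5_of_root7[OF assms(1)])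
    moreover have "0 < c" unfolding c_def using assms(1) by simp
    ultimately show ?thesis
      using quasirandom_pair_density_deviation_le[OF assms(4,2,3) _ _ _ A B] assms(1) by simp
  qed
  then show ?thesis
    unfolding eps_regular_def dens c_def[symmetric] using bip by blast
qed

end
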